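(* If $k\geq 2$ is an integer such that $2k+1$ is prime, then $f(k)=\frac{k(k-2)}{3}$.
   Context: A $k$-colouring of the edges of the complete graph $K_n$ (colours from $[k]=\{1,\dots,k\}$) is called connected if for each colour $i\in[k]$ the edges of colour $i$ form a connected spanning subgraph of $K_n$. A triangle is multicoloured if its three edges have three distinct colours; its colour set is the set of these three colours. $f(k)$ denotes the minimum, over all $n$ and all connected $k$-colourings of $K_n$, of the number of distinct $3$-sets of colours that occur as colour sets of multicoloured triangles. *)

theory Defs
  imports Complex_Main "HOL-Computational_Algebra.Primes"
begin

definition edge_colouring :: "nat \<Rightarrow> nat \<Rightarrow> (nat set \<Rightarrow> nat) \<Rightarrow> bool" where
  "edge_colouring k n c \<longleftrightarrow>
     (\<forall>u v. u < n \<longrightarrow> v < n \<longrightarrow> u \<noteq> v \<longrightarrow> c {u, v} \<in> {1..k})"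

definition colour_graph :: "nat \<Rightarrow> (nat set \<Rightarrow> nat) \<Rightarrow> nat \<Rightarrow> nat \<Rightarrow> nat \<Rightarrow> bool" where
  "colour_graph n c i u v \<longleftrightarrow> u < n \<and> v < n \<and> u \<noteq> v \<and> c {u, v} = i"

definition connected_colouring :: "nat \<Rightarrow> nat \<Rightarrow> (nat set \<Rightarrow> nat) \<Rightarrow> bool" where
  "connected_colouring k n c \<longleftrightarrow> 2 \<le> n \<and> edge_colouring k n c \<and>
     (\<forall>i \<in> {1..k}. \<forall>u v. u < n \<longrightarrow> v < n \<longrightarrow> (colour_graph n c i)\<^sup>*\<^sup>* u v)"

definition multicoloured_triangle_sets :: "nat \<Rightarrow> (nat set \<Rightarrow> nat) \<Rightarrow> nat set set" where
  "multicoloured_triangle_sets n c =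
     {S. \<exists>u v w. u < n \<and> v < n \<and> w < n \<and> u \<noteq> v \<and> v \<noteq> w \<and> u \<noteq> w \<and>
          S = {c {u, v}, c {v, w}, c {u, w}} \<and> card S = 3}"

definition f :: "nat \<Rightarrow> nat" where
  "f k = (LEAST m. \<exists>n c. connected_colouring k n c \<and> m = card (multicoloured_triangle_sets n c))"

end

theory Submission
  imports Defs
begin

text \<open>If three colours each span a connected subgraph of a rainbow-triangle-free
  colouring, deleting a suitable vertex keeps all three connected (Gallai), which is absurd on two
  vertices; so some triangle sees three of them. Merging the colours into the classes \<open>{a}\<close>,
  \<open>S\<close> and the rest, a colour \<open>a\<close> and any proper set \<open>S\<close> of other colours yield a
  multicoloured triangle through \<open>a\<close> with exactly one colour outside \<open>S\<close>. Adding that colour to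
  \<open>S\<close> and repeating gives \<open>k - 2\<close> distinct triangle colour sets through each colour, and double
  counting gives \<open>k (k - 2) \<le> 3 f(k)\<close>.

  Colour the edge \<open>{u, v}\<close> of \<open>K\<^sub>2\<^sub>k\<^sub>+\<^sub>1\<close> by the circular distance
  \<open>\<parallel>u - v\<parallel>\<close> in \<open>\<int>/(2k+1)\<close>. As \<open>2k + 1\<close> is prime, each colour class is a spanning cycle, and
  writing the differences of a triangle as \<open>a, m a, -(m + 1) a\<close> shows that every multicoloured
  colour set through \<open>a\<close> is \<open>{a, \<parallel>j a\<parallel>, \<parallel>(j + 1) a\<parallel>}\<close> with \<open>2 \<le> j \<le> k - 1\<close>.\<close>

section \<open>Gallai's theorem for three connected colour classes\<close>

definition colour_adj :: "'a set \<Rightarrow> ('a set \<Rightarrow> 'b) \<Rightarrow> 'b \<Rightarrow> 'a \<Rightarrow> 'a \<Rightarrow> bool" where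
  "colour_adj V d i u v \<longleftrightarrow> u \<in> V \<and> v \<in> V \<and> u \<noteq> v \<and> d {u, v} = i"

definition colour_connected :: "'a set \<Rightarrow> ('a set \<Rightarrow> 'b) \<Rightarrow> 'b \<Rightarrow> bool" where
  "colour_connected V d i \<longleftrightarrow> (\<forall>u\<in>V. \<forall>v\<in>V. (colour_adj V d i)\<^sup>*\<^sup>* u v)"

definition rainbow_triangle_free :: "'a set \<Rightarrow> ('a set \<Rightarrow> 'b) \<Rightarrow> bool" where
  "rainbow_triangle_free V d \<longleftrightarrow> (\<forall>u\<in>V. \<forall>v\<in>V. \<forall>w\<in>V. u \<noteq> v \<longrightarrow> v \<noteq> w \<longrightarrow> u \<noteq> w \<longrightarrow>
      d {u, v} = d {v, w} \<or> d {v, w} = d {u, w} \<or> d {u, v} = d {u, w})"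

lemma rainbow_triangle_freeD:
  "rainbow_triangle_free V d \<Longrightarrow> u \<in> V \<Longrightarrow> v \<in> V \<Longrightarrow> w \<in> V \<Longrightarrow> u \<noteq> v \<Longrightarrow> v \<noteq> w \<Longrightarrow> u \<noteq> w \<Longrightarrow>
   d {u, v} = d {v, w} \<or> d {v, w} = d {u, w} \<or> d {u, v} = d {u, w}"
  unfolding rainbow_triangle_free_def by blast

lemma rainbow_triangle_free_subset:
  "rainbow_triangle_free V d \<Longrightarrow> W \<subseteq> V \<Longrightarrow> rainbow_triangle_free W d"
  unfolding rainbow_triangle_free_def by blast

lemma colour_adj_sym: "colour_adj V d i u v \<Longrightarrow> colour_adj V d i v u"
  by (auto simp: colour_adj_def insert_commute)

lemma colour_adj_rtranclp_sym:
  "(colour_adj V d i)\<^sup>*\<^sup>* u v \<Longrightarrow> (colour_adj V d i)\<^sup>*\<^sup>* v u"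
  by (induction rule: rtranclp_induct)
    (auto intro: converse_rtranclp_into_rtranclp colour_adj_sym)

lemma colour_adj_rtranclp_common_source:
  "(colour_adj V d i)\<^sup>*\<^sup>* z a \<Longrightarrow> (colour_adj V d i)\<^sup>*\<^sup>* z b \<Longrightarrow> (colour_adj V d i)\<^sup>*\<^sup>* a b"
  by (rule rtranclp_trans[OF colour_adj_rtranclp_sym])

lemma colour_connected_crossing_edge:
  assumes "colour_connected V d i" "C \<subseteq> V" "u \<in> C" "w \<in> V - C"
  shows "\<exists>x\<in>C. \<exists>y. colour_adj V d i x y \<and> y \<notin> C"
proof -
  have "(colour_adj V d i)\<^sup>*\<^sup>* u w"
    using assms by (auto simp: colour_connected_def colour_adj_def)
  then show ?thesis
    using \<open>w \<in> V - C\<close>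
  proof (induction rule: rtranclp_induct)
    case base
    then show ?case using \<open>u \<in> C\<close> by blast
  next
    case (step y z)
    then show ?case by (cases "y \<in> C") (auto simp: colour_adj_def)
  qed
qed

text \<open>Along an \<open>i\<close>-edge \<open>b b'\<close> neither \<open>b x\<close> nor \<open>b' x\<close> has colour \<open>i\<close>, since \<open>x\<close> would
  then join the component of \<open>a\<close>; so the triangle \<open>b b' x\<close> forces them to agree.\<close>

lemma rainbow_triangle_free_colour_constant:
  assumes free: "rainbow_triangle_free V d"
    and path: "(colour_adj V d i)\<^sup>*\<^sup>* a a'" and x: "x \<in> V" "\<not> (colour_adj V d i)\<^sup>*\<^sup>* a x"
  shows "d {a, x} = d {a', x}"
  using path
proof (induction rule: rtranclp_induct)
  case base
  then show ?case by simp
next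
  case (step b b')
  have reach: "(colour_adj V d i)\<^sup>*\<^sup>* a b'"
    using step.hyps by (rule rtranclp.rtrancl_into_rtrancl)
  have b: "b \<in> V" "b' \<in> V" "b \<noteq> b'" "d {b, b'} = i"
    using step.hyps(2) by (auto simp: colour_adj_def)
  have "b \<noteq> x" "b' \<noteq> x"
    using step.hyps(1) reach x(2) by auto
  have "d {b, x} \<noteq> i" "d {b', x} \<noteq> i"
    using b x \<open>b \<noteq> x\<close> \<open>b' \<noteq> x\<close> step.hyps(1) reach
    by (auto simp: colour_adj_def intro: rtranclp.rtrancl_into_rtrancl)
  then have "d {b', x} = d {b, x}"
    using rainbow_triangle_freeD[OF free b(1,2) x(1) b(3) \<open>b' \<noteq> x\<close> \<open>b \<noteq> x\<close>] b(4)
    by (auto simp: insert_commute)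
  then show ?case using step.IH by simp
qed

lemma colour_connected_reaches_neighbour:
  assumes "colour_connected V d i" "v \<in> V" "a \<in> V - {v}"
  shows "\<exists>y\<in>V - {v}. (colour_adj (V - {v}) d i)\<^sup>*\<^sup>* a y \<and> d {y, v} = i"
proof -
  have "(colour_adj V d i)\<^sup>*\<^sup>* a v"
    using assms by (auto simp: colour_connected_def)
  then show ?thesis
    using \<open>a \<in> V - {v}\<close>
  proof (induction rule: converse_rtranclp_induct)
    case base
    then show ?case by simp
  next
    case (step a a')
    show ?case
    proof (cases "a' = v")
      case True
      then show ?thesis using step.hyps(1) step.prems by (auto simp: colour_adj_def)
    next
      case False
      then have "colour_adj (V - {v}) d i a a'"
        using step.hyps(1) step.prems by (auto simp: colour_adj_def)
      then show ?thesis
        using step.IH False step.hyps(1) by (auto simp: colour_adj_def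
          intro: converse_rtranclp_into_rtranclp)
    qed
  qed
qed

lemma colour_disconnected_neighbour_off_component:
  assumes conn: "colour_connected V d i" and v: "v \<in> V"
    and disconnected: "\<not> colour_connected (V - {v}) d i" and z: "z \<in> V - {v}"
  shows "\<exists>y\<in>V - {v}. \<not> (colour_adj (V - {v}) d i)\<^sup>*\<^sup>* z y \<and> d {y, v} = i"
proof -
  let ?R = "(colour_adj (V - {v}) d i)\<^sup>*\<^sup>*"
  obtain a b where ab: "a \<in> V - {v}" "b \<in> V - {v}" "\<not> ?R a b"
    using disconnected unfolding colour_connected_def by blast
  then have "\<not> ?R z a \<or> \<not> ?R z b"
    using colour_adj_rtranclp_common_source by fast
  then obtain y0 where y0: "y0 \<in> V - {v}" "\<not> ?R z y0"
    using ab(1,2) by blast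
  obtain y where y: "y \<in> V - {v}" "?R y0 y" "d {y, v} = i"
    using colour_connected_reaches_neighbour[OF conn v y0(1)] by blast
  have "\<not> ?R z y"
  proof
    assume "?R z y"
    then have "?R z y0"
      using rtranclp_trans[OF _ colour_adj_rtranclp_sym[OF y(2)]] by blast
    then show False using y0(2) by blast
  qed
  then show ?thesis
    using y by blast
qed

lemma rainbow_triangle_free_edges_leaving_component:
  assumes free: "rainbow_triangle_free V d" and ij: "i \<noteq> j"
    and conn: "colour_connected V d i" and v: "v \<in> V"
    and z: "z \<in> V - {v}" "d {v, z} = j"
    and y: "y \<in> V - {v}" "\<not> (colour_adj (V - {v}) d i)\<^sup>*\<^sup>* z y"
    and w: "(colour_adj (V - {v}) d i)\<^sup>*\<^sup>* z w"
  shows "d {y, w} = j"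
proof -
  let ?R = "(colour_adj (V - {v}) d i)\<^sup>*\<^sup>*"
  have free': "rainbow_triangle_free (V - {v}) d"
    using free by (rule rainbow_triangle_free_subset) blast
  obtain y' where y': "y' \<in> V - {v}" "?R y y'" "d {y', v} = i"
    using colour_connected_reaches_neighbour[OF conn v y(1)] by blast
  have "\<not> ?R y z"
    using y(2) by (blast dest: colour_adj_rtranclp_sym)
  then have "\<not> ?R y' z"
    using y'(2) by (meson rtranclp_trans)
  moreover have "y' \<noteq> z"
    using \<open>\<not> ?R y' z\<close> by auto
  ultimately have "d {y', z} \<noteq> i"
    using y'(1) z(1) by (auto simp: colour_adj_def)
  then have "d {y', z} = j"
    using rainbow_triangle_freeD[OF free v _ _ _ \<open>y' \<noteq> z\<close>] y'(1,3) z ij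
    by (auto simp: insert_commute)
  moreover have "d {y, z} = d {y', z}"
    using rainbow_triangle_free_colour_constant[OF free' y'(2) z(1) \<open>\<not> ?R y z\<close>] .
  moreover have "d {z, y} = d {w, y}"
    using rainbow_triangle_free_colour_constant[OF free' w y] .
  ultimately show ?thesis by (simp add: insert_commute)
qed

text \<open>If \<open>i\<close> were disconnected, take a \<open>j\<close>-neighbour \<open>z\<close> of \<open>v\<close> and its \<open>i\<close>-component \<open>C\<close>
  in \<open>V - {v}\<close>: edges from \<open>C\<close> to the rest of \<open>V - {v}\<close> have colour \<open>j\<close>, and edges from \<open>C\<close>
  to \<open>v\<close> have colour \<open>i\<close> or \<open>j\<close>, so no \<open>j'\<close>-edge leaves \<open>C\<close>.\<close>

lemma rainbow_triangle_free_remove_vertex_connected: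
  assumes free: "rainbow_triangle_free V d" and v: "v \<in> V" and nonempty: "V - {v} \<noteq> {}"
    and distinct: "i \<noteq> j" "j \<noteq> j'" "i \<noteq> j'"
    and conn: "colour_connected V d i" "colour_connected V d j" "colour_connected V d j'"
  shows "colour_connected (V - {v}) d i"
proof (rule ccontr)
  assume disconnected: "\<not> colour_connected (V - {v}) d i"
  let ?R = "(colour_adj (V - {v}) d i)\<^sup>*\<^sup>*"
  obtain z where z: "z \<in> V - {v}" "d {v, z} = j"
    using colour_connected_crossing_edge[OF conn(2), of "{v}" v] v nonempty
    by (auto simp: colour_adj_def)
  define C where "C = {w \<in> V - {v}. ?R z w}"
  have leaving: "d {y, w} = j" if "y \<in> V - {v}" "y \<notin> C" "w \<in> C" for y w
    using rainbow_triangle_free_edges_leaving_component[OF free distinct(1) conn(1) v z, of y w]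
      that by (auto simp: C_def)
  obtain y1 where y1: "y1 \<in> V - {v}" "y1 \<notin> C" "d {y1, v} = i"
    using colour_disconnected_neighbour_off_component[OF conn(1) v disconnected z(1)]
    unfolding C_def by blast
  have to_v: "d {v, w} \<noteq> j'" if "w \<in> C" for w
  proof -
    have "d {y1, w} = j" "y1 \<noteq> w" "w \<in> V - {v}"
      using leaving[OF y1(1,2) that] y1(2) that by (auto simp: C_def)
    then show ?thesis
      using rainbow_triangle_freeD[OF free v, of y1 w] y1(1,3) distinct
      by (auto simp: insert_commute)
  qed
  obtain x y where xy: "x \<in> C" "colour_adj V d j' x y" "y \<notin> C"
    using colour_connected_crossing_edge[OF conn(3), of C z v] z(1) v
    by (auto simp: C_def)
  have "d {x, y} = j'" "y \<in> V"
    using xy(2) by (auto simp: colour_adj_def)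
  show False
  proof (cases "y = v")
    case True
    then show ?thesis
      using to_v[OF xy(1)] \<open>d {x, y} = j'\<close> by (simp add: insert_commute)
  next
    case False
    then have "d {y, x} = j"
      using leaving[OF _ xy(3,1)] \<open>y \<in> V\<close> by blast
    then show ?thesis
      using \<open>d {x, y} = j'\<close> distinct(2) by (simp add: insert_commute)
  qed
qed

theorem rainbow_triangle_free_not_three_colours_connected:
  assumes "finite V" "2 \<le> card V" "rainbow_triangle_free V d"
    and distinct: "p \<noteq> q" "q \<noteq> r" "p \<noteq> r"
  shows "\<not> (colour_connected V d p \<and> colour_connected V d q \<and> colour_connected V d r)"
  using assms(1-3)
proof (induction "card V" arbitrary: V rule: less_induct)
  case less
  show ?case
  proof (intro notI, elim conjE)
    assume conn: "colour_connected V d p" "colour_connected V d q" "colour_connected V d r"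
    obtain v where v: "v \<in> V"
      using less.prems(2) by fastforce
    have card_rest: "card (V - {v}) = card V - 1"
      using v by (simp add: card_Diff_singleton)
    have nonempty: "V - {v} \<noteq> {}"
    proof
      assume "V - {v} = {}"
      then have "card V - 1 = 0" using card_rest by (metis card.empty)
      then show False using less.prems(2) by simp
    qed
    show False
    proof (cases "card V = 2")
      case True
      then have "card (V - {v}) = 1"
        using card_rest by simp
      then obtain w where w: "V - {v} = {w}"
        by (rule card_1_singletonE)
      have colour: "d {v, w} = x" if conn_x: "colour_connected V d x" for x
      proof -
        obtain y where "colour_adj V d x v y" "y \<noteq> v"
          using colour_connected_crossing_edge[OF conn_x, of "{v}" v w] v w by blast
        moreover have "y = w"
          using calculation w by (auto simp: colour_adj_def)
        ultimately show ?thesis by (simp add: colour_adj_def)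
      qed
      show False
        using colour[OF conn(1)] colour[OF conn(2)] distinct(1) by simp
    next
      case False
      note remove = rainbow_triangle_free_remove_vertex_connected[OF less.prems(3) v nonempty]
      have "colour_connected (V - {v}) d p"
        using remove[OF distinct conn] .
      moreover have "colour_connected (V - {v}) d q"
        using remove[OF distinct(1)[symmetric] distinct(3) distinct(2) conn(2,1,3)] .
      moreover have "colour_connected (V - {v}) d r"
        using remove[OF distinct(3)[symmetric] distinct(1) distinct(2)[symmetric] conn(3,1,2)] .
      moreover have "card (V - {v}) < card V" "2 \<le> card (V - {v})"
        using less.prems(2) card_rest False by auto
      moreover have "rainbow_triangle_free (V - {v}) d"
        using less.prems(3) by (rule rainbow_triangle_free_subset) blast
      ultimately show False
        using less.hyps[of "V - {v}"] less.prems(1) by blast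
    qed
  qed
qed


section \<open>Lower bound\<close>

lemma multicoloured_triangle_sets_subset:
  assumes "edge_colouring k n c" "t \<in> multicoloured_triangle_sets n c"
  shows "t \<subseteq> {1..k}" "card t = 3"
  using assms unfolding multicoloured_triangle_sets_def edge_colouring_def by auto

lemma finite_multicoloured_triangle_sets:
  assumes "edge_colouring k n c"
  shows "finite (multicoloured_triangle_sets n c)"
proof (rule finite_subset)
  show "multicoloured_triangle_sets n c \<subseteq> Pow {1..k}"
    using multicoloured_triangle_sets_subset[OF assms] by blast
qed simp

lemma sum_colour_degrees:
  assumes "edge_colouring k n c"
  shows "(\<Sum>a\<in>{1..k}. card {t \<in> multicoloured_triangle_sets n c. a \<in> t})
    = 3 * card (multicoloured_triangle_sets n c)"
proof (rule sum_multicount)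
  show "\<forall>t\<in>multicoloured_triangle_sets n c. card {a \<in> {1..k}. a \<in> t} = 3"
  proof
    fix t assume "t \<in> multicoloured_triangle_sets n c"
    then have "{a \<in> {1..k}. a \<in> t} = t" "card t = 3"
      using multicoloured_triangle_sets_subset[OF assms] by blast+
    then show "card {a \<in> {1..k}. a \<in> t} = 3" by simp
  qed
qed (simp_all add: finite_multicoloured_triangle_sets[OF assms])

text \<open>Merging colour classes keeps every class connected, so Gallai's theorem applies to the
  merged colouring.\<close>

lemma connected_colouring_merged_multicoloured_triangle:
  assumes cc: "connected_colouring k n c"
    and colours: "x \<in> {1..k}" "y \<in> {1..k}" "z \<in> {1..k}"
    and distinct: "g x \<noteq> g y" "g y \<noteq> g z" "g x \<noteq> g z"
  shows "\<exists>t\<in>multicoloured_triangle_sets n c. card (g ` t) = 3"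
proof -
  have conn: "colour_connected {0..<n} (g \<circ> c) (g i)" if "i \<in> {1..k}" for i
    unfolding colour_connected_def
  proof (intro ballI)
    fix u v assume "u \<in> {0..<n}" "v \<in> {0..<n}"
    then have "(colour_graph n c i)\<^sup>*\<^sup>* u v"
      using cc that by (auto simp: connected_colouring_def)
    then show "(colour_adj {0..<n} (g \<circ> c) (g i))\<^sup>*\<^sup>* u v"
      by (rule mono_rtranclp[rule_format, rotated]) (auto simp: colour_graph_def colour_adj_def)
  qed
  have "2 \<le> card {0..<n}"
    using cc by (simp add: connected_colouring_def)
  then have "\<not> rainbow_triangle_free {0..<n} (g \<circ> c)"
    using rainbow_triangle_free_not_three_colours_connected[OF _ _ _ distinct] conn colours
    by blast
  then obtain u v w where uvw: "u < n" "v < n" "w < n" "u \<noteq> v" "v \<noteq> w" "u \<noteq> w"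
    and g_distinct: "g (c {u, v}) \<noteq> g (c {v, w})" "g (c {v, w}) \<noteq> g (c {u, w})"
      "g (c {u, v}) \<noteq> g (c {u, w})"
    by (auto simp: rainbow_triangle_free_def)
  define t where "t = {c {u, v}, c {v, w}, c {u, w}}"
  have "c {u, v} \<noteq> c {v, w}" "c {v, w} \<noteq> c {u, w}" "c {u, v} \<noteq> c {u, w}"
    using g_distinct by auto
  then have "card t = 3"
    by (simp add: t_def)
  then have "t \<in> multicoloured_triangle_sets n c"
    unfolding multicoloured_triangle_sets_def t_def using uvw by blast
  moreover have "card (g ` t) = 3"
    using g_distinct by (simp add: t_def)
  ultimately show ?thesis ..
qed

lemma multicoloured_triangle_leaving_colour_set:
  assumes cc: "connected_colouring k n c" and a: "a \<in> {1..k}"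
    and S: "S \<subseteq> {1..k} - {a}" "S \<noteq> {}" "{1..k} - insert a S \<noteq> {}"
  shows "\<exists>t\<in>multicoloured_triangle_sets n c. \<exists>y\<in>{1..k} - insert a S.
    a \<in> t \<and> y \<in> t \<and> t \<subseteq> insert a (insert y S)"
proof -
  define g :: "nat \<Rightarrow> nat" where "g x = (if x = a then 0 else if x \<in> S then 1 else 2)" for x
  obtain s r where s: "s \<in> S" and r: "r \<in> {1..k} - insert a S"
    using S(2,3) by blast
  have "g a = 0" "g s = 1" "g r = 2" "s \<in> {1..k}" "r \<in> {1..k}"
    using s r S(1) by (auto simp: g_def)
  then obtain t where t: "t \<in> multicoloured_triangle_sets n c" and "card (g ` t) = 3"
    using connected_colouring_merged_multicoloured_triangle[OF cc a, of s r g] by auto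
  have "edge_colouring k n c"
    using cc by (simp add: connected_colouring_def)
  then have "t \<subseteq> {1..k}" "card t = 3"
    using multicoloured_triangle_sets_subset t by blast+
  have "g ` t \<subseteq> {0, 1, 2}"
    by (auto simp: g_def)
  then have g_image: "g ` t = {0, 1, 2}"
    using \<open>card (g ` t) = 3\<close> by (intro card_seteq) auto
  have g_inj: "inj_on g t"
    using \<open>card (g ` t) = 3\<close> \<open>card t = 3\<close> by (intro eq_card_imp_inj_on) (auto intro: card_ge_0_finite)
  obtain y where y: "y \<in> t" "g y = 2"
    using g_image by (metis imageE insertI1 insertI2)
  show ?thesis
  proof (intro bexI conjI)
    obtain x where "x \<in> t" "g x = 0"
      using g_image by (metis imageE insertI1)
    then show "a \<in> t"
      by (simp add: g_def split: if_splits)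
    show "t \<subseteq> insert a (insert y S)"
    proof
      fix x assume x: "x \<in> t"
      show "x \<in> insert a (insert y S)"
      proof (cases "g x = 2")
        case True
        then show ?thesis using inj_onD[OF g_inj _ x y(1)] y(2) by simp
      next
        case False
        then show ?thesis by (auto simp: g_def split: if_splits)
      qed
    qed
    show "y \<in> {1..k} - insert a S"
      using y \<open>t \<subseteq> {1..k}\<close> by (auto simp: g_def split: if_splits)
  qed (use t y in auto)
qed

lemma colour_set_with_many_triangles:
  assumes cc: "connected_colouring k n c" and a: "a \<in> {1..k}"
  shows "m + 2 \<le> k \<Longrightarrow> \<exists>S \<subseteq> {1..k} - {a}. card S = m + 1 \<and>
    m \<le> card {t \<in> multicoloured_triangle_sets n c. a \<in> t \<and> t \<subseteq> insert a S}"
proof (induction m)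
  case 0
  then have "(if a = 1 then 2 else 1) \<in> {1..k} - {a}"
    using a by auto
  then show ?case by (intro exI[of _ "{if a = 1 then 2 else 1}"]) auto
next
  case (Suc m)
  let ?T = "multicoloured_triangle_sets n c"
  obtain S where S: "S \<subseteq> {1..k} - {a}" "card S = m + 1"
    and many: "m \<le> card {t \<in> ?T. a \<in> t \<and> t \<subseteq> insert a S}"
    using Suc by auto
  have "card S < card ({1..k} - {a})"
    using S(2) Suc.prems a by simp
  moreover have "finite S"
    using S(2) card.infinite by fastforce
  ultimately have "\<not> {1..k} - {a} \<subseteq> S"
    using card_mono leD by blast
  then have "{1..k} - insert a S \<noteq> {}"
    by blast
  moreover have "S \<noteq> {}"
    using S(2) by auto
  ultimately obtain t y where t: "t \<in> ?T" "a \<in> t" "y \<in> t" "t \<subseteq> insert a (insert y S)"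
    and y: "y \<in> {1..k} - insert a S"
    using multicoloured_triangle_leaving_colour_set[OF cc a S(1)] by blast
  have fin: "finite ?T"
    using cc finite_multicoloured_triangle_sets by (auto simp: connected_colouring_def)
  let ?old = "{t \<in> ?T. a \<in> t \<and> t \<subseteq> insert a S}"
  let ?new = "{t \<in> ?T. a \<in> t \<and> t \<subseteq> insert a (insert y S)}"
  have "t \<notin> ?old"
    using t(3) y by auto
  then have "Suc m \<le> card (insert t ?old)"
    using many fin by simp
  also have "\<dots> \<le> card ?new"
    using t fin by (intro card_mono) auto
  finally have "Suc m \<le> card ?new" .
  moreover have "insert y S \<subseteq> {1..k} - {a}" "card (insert y S) = Suc m + 1"
    using S y by (auto simp: finite_subset)
  ultimately show ?case by blast
qed

lemma colour_degree_lower_bound: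
  assumes "connected_colouring k n c" "a \<in> {1..k}"
  shows "k - 2 \<le> card {t \<in> multicoloured_triangle_sets n c. a \<in> t}"
proof (cases "2 \<le> k")
  case True
  then have "k - 2 + 2 \<le> k" by simp
  then obtain S where "k - 2 \<le> card {t \<in> multicoloured_triangle_sets n c. a \<in> t \<and> t \<subseteq> insert a S}"
    using colour_set_with_many_triangles[OF assms] by blast
  also have "\<dots> \<le> card {t \<in> multicoloured_triangle_sets n c. a \<in> t}"
    using assms(1) finite_multicoloured_triangle_sets
    by (intro card_mono) (auto simp: connected_colouring_def)
  finally show ?thesis .
qed simp

theorem multicoloured_triangle_sets_lower_bound:
  assumes "connected_colouring k n c"
  shows "k * (k - 2) \<le> 3 * card (multicoloured_triangle_sets n c)"
proof -
  have "k * (k - 2) = (\<Sum>a\<in>{1..k}. k - 2)"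
    by simp
  also have "\<dots> \<le> (\<Sum>a\<in>{1..k}. card {t \<in> multicoloured_triangle_sets n c. a \<in> t})"
    using colour_degree_lower_bound[OF assms] by (intro sum_mono) auto
  also have "\<dots> = 3 * card (multicoloured_triangle_sets n c)"
    using assms sum_colour_degrees by (auto simp: connected_colouring_def)
  finally show ?thesis .
qed


section \<open>The circulant colouring\<close>

text \<open>\<open>circulant_colour k x\<close> is the circular distance \<open>\<parallel>x\<parallel>\<close> from \<open>x\<close> to the nearest multiple
  of \<open>2k + 1\<close>.\<close>

definition circulant_colour :: "nat \<Rightarrow> int \<Rightarrow> nat" where
  "circulant_colour k x = nat (min (x mod (2 * int k + 1)) ((- x) mod (2 * int k + 1)))"

definition circulant_colouring :: "nat \<Rightarrow> nat set \<Rightarrow> nat" where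
  "circulant_colouring k e = circulant_colour k (int (Max e) - int (Min e))"

lemma circulant_colour_uminus [simp]: "circulant_colour k (- x) = circulant_colour k x"
  by (simp add: circulant_colour_def min.commute)

lemma circulant_colour_mod_eq:
  "x mod (2 * int k + 1) = y mod (2 * int k + 1) \<Longrightarrow> circulant_colour k x = circulant_colour k y"
  unfolding circulant_colour_def by (metis mod_minus_eq)

lemma circulant_colour_add_multiple [simp]:
  "circulant_colour k (x + (2 * int k + 1) * z) = circulant_colour k x"
  by (rule circulant_colour_mod_eq) simp

lemma circulant_colour_reflect:
  "circulant_colour k ((2 * int k + 1 - n) * x) = circulant_colour k (n * x)"
proof -
  have "(2 * int k + 1 - n) * x = - (n * x) + (2 * int k + 1) * x"
    by (simp add: algebra_simps)
  then have "circulant_colour k ((2 * int k + 1 - n) * x) = circulant_colour k (- (n * x))"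
    by (simp only: circulant_colour_add_multiple)
  then show ?thesis by simp
qed

lemma circulant_colour_of_nat:
  assumes "i \<le> k"
  shows "circulant_colour k (int i) = i"
proof -
  have "(- int i) mod (2 * int k + 1) = (if i = 0 then 0 else 2 * int k + 1 - int i)"
    using assms by (simp add: zmod_zminus1_eq_if)
  then show ?thesis
    using assms by (simp add: circulant_colour_def)
qed

lemma circulant_colour_range:
  assumes "\<not> (2 * int k + 1) dvd x"
  shows "circulant_colour k x \<in> {1..k}"
proof -
  let ?P = "2 * int k + 1"
  have "x mod ?P < ?P"
    by (rule pos_mod_bound) simp
  moreover have "0 < x mod ?P"
    using assms by (simp add: dvd_eq_mod_eq_0 order_less_le)
  moreover have "(- x) mod ?P = ?P - x mod ?P"
    using assms by (simp add: zmod_zminus1_eq_if dvd_eq_mod_eq_0)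
  ultimately have "1 \<le> min (x mod ?P) ((- x) mod ?P)" "min (x mod ?P) ((- x) mod ?P) \<le> int k"
    by (simp_all add: min_def)
  then show ?thesis
    by (simp add: circulant_colour_def le_nat_iff nat_le_iff)
qed

lemma circulant_colour_cases:
  assumes "circulant_colour k x = a"
  shows "x mod (2 * int k + 1) = int a \<or> (- x) mod (2 * int k + 1) = int a"
proof -
  have "0 \<le> x mod (2 * int k + 1)" "0 \<le> (- x) mod (2 * int k + 1)"
    by simp_all
  then show ?thesis
    using assms by (auto simp: circulant_colour_def min_def split: if_splits)
qed

lemma circulant_colouring_pair:
  "circulant_colouring k {u, v} = circulant_colour k (int v - int u)"
proof (cases "u \<le> v")
  case True
  then show ?thesis by (simp add: circulant_colouring_def max_def min_def)
next
  case False
  then have "circulant_colouring k {u, v} = circulant_colour k (- (int v - int u))"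
    by (simp add: circulant_colouring_def max_def min_def)
  then show ?thesis
    using circulant_colour_uminus[of k "int v - int u"] by simp
qed

lemma prime_mod_solvable:
  fixes p a e :: int
  assumes "prime p" "\<not> p dvd a"
  shows "\<exists>m. 0 \<le> m \<and> m < p \<and> (m * a) mod p = e mod p"
proof -
  have "coprime a p"
    using prime_imp_coprime[OF assms] by (simp add: coprime_commute)
  then obtain s t where st: "s * a + t * p = 1"
    using bezout_int[of a p] by auto
  have "e * (s * a) + e * (t * p) = e"
    using st by (metis distrib_left mult.right_neutral)
  then have "e * (s * a) = e + p * (- e * t)"
    by (simp add: algebra_simps)
  then have "(e * s mod p * a) mod p = (e + p * (- e * t)) mod p"
    by (simp add: mod_mult_left_eq mult.assoc)
  then have "(e * s mod p * a) mod p = e mod p"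
    by (simp only: mod_mult_self2)
  moreover have "0 < p"
    using assms(1) prime_gt_0_int by blast
  ultimately show ?thesis
    by (intro exI[of _ "e * s mod p"]) simp
qed

lemma of_nat_diff_not_dvd:
  assumes "u < p" "v < p" "u \<noteq> v"
  shows "\<not> int p dvd (int v - int u)"
proof
  assume "int p dvd (int v - int u)"
  then have "\<bar>int p\<bar> \<le> \<bar>int v - int u\<bar>"
    using assms(3) by (intro dvd_imp_le_int) simp_all
  then show False
    using assms(1,2) by linarith
qed

lemma circulant_colouring_edge_colouring: "edge_colouring k (2 * k + 1) (circulant_colouring k)"
  unfolding edge_colouring_def
proof (intro allI impI)
  fix u v assume "u < 2 * k + 1" "v < 2 * k + 1" "u \<noteq> v"
  then have "\<not> int (2 * k + 1) dvd (int v - int u)"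
    by (rule of_nat_diff_not_dvd)
  then have "\<not> (2 * int k + 1) dvd (int v - int u)"
    by (simp add: add.commute)
  then show "circulant_colouring k {u, v} \<in> {1..k}"
    unfolding circulant_colouring_pair by (rule circulant_colour_range)
qed

lemma circulant_colour_graph_step:
  assumes "x < 2 * k + 1" "1 \<le> i" "i \<le> k"
  shows "colour_graph (2 * k + 1) (circulant_colouring k) i x ((x + i) mod (2 * k + 1))"
proof -
  let ?y = "(x + i) mod (2 * k + 1)"
  have "int ?y = (int x + int i) mod (2 * int k + 1)"
    by (simp add: of_nat_mod add.commute)
  then have "(int ?y - int x) mod (2 * int k + 1) = int i mod (2 * int k + 1)"
    by (simp add: mod_diff_left_eq)
  moreover have i_mod: "int i mod (2 * int k + 1) = int i"
    using assms(3) by simp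
  ultimately have diff: "(int ?y - int x) mod (2 * int k + 1) = int i"
    by simp
  then have "circulant_colouring k {x, ?y} = circulant_colour k (int i)"
    unfolding circulant_colouring_pair by (intro circulant_colour_mod_eq) (simp add: i_mod)
  then have "circulant_colouring k {x, ?y} = i"
    using assms(3) by (simp add: circulant_colour_of_nat)
  moreover have "?y \<noteq> x"
    using diff assms(2) by auto
  ultimately show ?thesis
    using assms(1) by (simp add: colour_graph_def)
qed

lemma circulant_colour_graph_connected:
  assumes prime: "prime (2 * k + 1)" and i: "1 \<le> i" "i \<le> k"
    and uw: "u < 2 * k + 1" "w < 2 * k + 1"
  shows "(colour_graph (2 * k + 1) (circulant_colouring k) i)\<^sup>*\<^sup>* u w"
proof -
  let ?p = "2 * k + 1"
  let ?R = "(colour_graph ?p (circulant_colouring k) i)\<^sup>*\<^sup>*"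
  have walk: "?R u ((u + j * i) mod ?p)" for j
  proof (induction j)
    case 0
    then show ?case using uw by simp
  next
    case (Suc j)
    have "(u + Suc j * i) mod ?p = (u + j * i + i) mod ?p"
      by (simp add: algebra_simps)
    also have "\<dots> = ((u + j * i) mod ?p + i) mod ?p"
      by (simp only: mod_add_left_eq)
    finally have "(u + Suc j * i) mod ?p = ((u + j * i) mod ?p + i) mod ?p" .
    then show ?case
      using Suc.IH circulant_colour_graph_step[of "(u + j * i) mod ?p" k i] i
      by (simp add: rtranclp.rtrancl_into_rtrancl)
  qed
  have "\<not> ?p dvd i"
    using i by (auto dest: dvd_imp_le)
  then have "\<not> int ?p dvd int i"
    by (simp only: int_dvd_int_iff not_False_eq_True)
  moreover have "prime (int ?p)"
    using prime by (simp only: prime_nat_int_transfer)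
  ultimately obtain m where m: "0 \<le> m" "m < int ?p" "(m * int i) mod int ?p = (int w - int u) mod int ?p"
    using prime_mod_solvable by blast
  have "int ((u + nat m * i) mod ?p) = (int u + m * int i) mod int ?p"
    using m(1) by (simp add: of_nat_mod)
  also have "\<dots> = (int u + (int w - int u)) mod int ?p"
    using m(3) by (metis mod_add_right_eq)
  also have "\<dots> = int w"
    using uw by simp
  finally show ?thesis
    using walk[of "nat m"] by simp
qed

lemma circulant_colouring_connected:
  assumes "prime (2 * k + 1)"
  shows "connected_colouring k (2 * k + 1) (circulant_colouring k)"
  unfolding connected_colouring_def
proof (intro conjI ballI allI impI)
  show "2 \<le> 2 * k + 1"
    using prime_ge_2_nat[OF assms] .
  show "edge_colouring k (2 * k + 1) (circulant_colouring k)"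
    by (rule circulant_colouring_edge_colouring)
  fix i u v assume "i \<in> {1..k}" "u < 2 * k + 1" "v < 2 * k + 1"
  then show "(colour_graph (2 * k + 1) (circulant_colouring k) i)\<^sup>*\<^sup>* u v"
    using circulant_colour_graph_connected[OF assms] by simp
qed

lemma circulant_colour_distinct_residue:
  assumes "a \<le> k" and r: "0 \<le> r" "r < 2 * int k + 1"
    and distinct: "circulant_colour k (r * int a) \<noteq> a" "circulant_colour k ((r + 1) * int a) \<noteq> a"
      "circulant_colour k (r * int a) \<noteq> circulant_colour k ((r + 1) * int a)"
  shows "2 \<le> r \<and> r \<le> int k - 1 \<or> int k + 1 \<le> r \<and> r \<le> 2 * int k - 2"
proof -
  let ?P = "2 * int k + 1"
  let ?c = "\<lambda>n. circulant_colour k (n * int a)"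
  have c_1: "?c 1 = a"
    using assms(1) by (simp add: circulant_colour_of_nat)
  have reflect: "?c (?P - n) = ?c n" for n
    by (rule circulant_colour_reflect)
  have "r \<noteq> 0" "r \<noteq> 1"
    using distinct c_1 by auto
  moreover have "r \<noteq> int k"
  proof
    assume "r = int k"
    then have "r + 1 = ?P - r" by simp
    then show False using distinct(3) reflect[of r] by simp
  qed
  moreover have "r \<noteq> 2 * int k - 1"
  proof
    assume "r = 2 * int k - 1"
    then have "r + 1 = ?P - 1" by simp
    then show False using distinct(2) c_1 reflect[of 1] by simp
  qed
  moreover have "r \<noteq> 2 * int k"
  proof
    assume "r = 2 * int k"
    then have "r = ?P - 1" by simp
    then show False using distinct(1) c_1 reflect[of 1] by simp
  qed
  ultimately show ?thesis
    using r by linarith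
qed

text \<open>The reflection \<open>j \<mapsto> 2k - j\<close> swaps the two colours \<open>\<parallel>j a\<parallel>\<close> and \<open>\<parallel>(j + 1) a\<parallel>\<close>, which
  brings every admissible multiplier into \<open>{2..k - 1}\<close>.\<close>

lemma circulant_colour_triple:
  assumes "a \<le> k"
    and distinct: "circulant_colour k (m * int a) \<noteq> a" "circulant_colour k ((m + 1) * int a) \<noteq> a"
      "circulant_colour k (m * int a) \<noteq> circulant_colour k ((m + 1) * int a)"
  shows "\<exists>j\<in>{2..k - 1}. {a, circulant_colour k (m * int a), circulant_colour k ((m + 1) * int a)} =
    {a, circulant_colour k (int j * int a), circulant_colour k (int (j + 1) * int a)}"
proof -
  let ?P = "2 * int k + 1"
  let ?c = "\<lambda>n. circulant_colour k (n * int a)"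
  define r where "r = m mod ?P"
  have r: "0 \<le> r" "r < ?P"
    unfolding r_def by (simp, rule pos_mod_bound, simp)
  have "(m * int a) mod ?P = (r * int a) mod ?P" "((m + 1) * int a) mod ?P = ((r + 1) * int a) mod ?P"
    unfolding r_def by (metis mod_mult_left_eq, metis mod_add_left_eq mod_mult_left_eq)
  then have c_r: "?c m = ?c r" "?c (m + 1) = ?c (r + 1)"
    by (auto intro: circulant_colour_mod_eq)
  have "2 \<le> r \<and> r \<le> int k - 1 \<or> int k + 1 \<le> r \<and> r \<le> 2 * int k - 2"
    using circulant_colour_distinct_residue[OF assms(1) r] distinct unfolding c_r by blast
  then obtain j where "j \<in> {2..k - 1}" "{?c r, ?c (r + 1)} = {?c (int j), ?c (int (j + 1))}"
  proof (elim disjE conjE)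
    assume "2 \<le> r" "r \<le> int k - 1"
    then have "nat r \<in> {2..k - 1}" "int (nat r) = r"
      by auto
    then show ?thesis
      using that[of "nat r"] by (simp add: add.commute)
  next
    assume "int k + 1 \<le> r" "r \<le> 2 * int k - 2"
    define j where "j = nat (2 * int k - r)"
    have j: "j \<in> {2..k - 1}" "int j = ?P - (r + 1)" "int (j + 1) = ?P - r"
      using \<open>int k + 1 \<le> r\<close> \<open>r \<le> 2 * int k - 2\<close> by (auto simp: j_def)
    have "?c (int j) = ?c (r + 1)" "?c (int (j + 1)) = ?c r"
      by (simp_all only: j(2,3) circulant_colour_reflect)
    then have "{?c r, ?c (r + 1)} = {?c (int j), ?c (int (j + 1))}"
      by (simp only: insert_commute)
    then show ?thesis
      by (rule that[OF j(1)])
  qed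
  then show ?thesis
    unfolding c_r by auto
qed

lemma circulant_colour_multiples:
  assumes prime: "prime (2 * k + 1)" and x: "\<not> (2 * int k + 1) dvd x"
  defines "a \<equiv> circulant_colour k x"
  shows "\<exists>m. circulant_colour k y = circulant_colour k (m * int a) \<and>
    circulant_colour k (x + y) = circulant_colour k ((m + 1) * int a)"
proof -
  let ?P = "2 * int k + 1"
  have a: "a \<in> {1..k}"
    unfolding a_def using x by (rule circulant_colour_range)
  have "x mod ?P = int a \<or> (- x) mod ?P = int a"
    by (rule circulant_colour_cases) (simp add: a_def)
  then obtain s where s: "s = 1 \<or> s = -1" "(s * x) mod ?P = int a"
    by (metis mult_1 mult_minus1)
  have colour_s: "circulant_colour k (s * z) = circulant_colour k z" for z
    using s(1) by (elim disjE) simp_all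
  have "prime (int (2 * k + 1))"
    using prime by (simp only: prime_nat_int_transfer)
  then have "prime ?P"
    by (simp only: of_nat_add of_nat_mult of_nat_numeral of_nat_1)
  moreover have "\<not> ?P dvd int a"
  proof
    assume "?P dvd int a"
    then have "?P \<le> int a"
      using a by (intro zdvd_imp_le) auto
    then show False
      using a by simp
  qed
  ultimately obtain m where m: "(m * int a) mod ?P = (s * y) mod ?P"
    using prime_mod_solvable by blast
  have "circulant_colour k (m * int a) = circulant_colour k (s * y)"
    using m by (rule circulant_colour_mod_eq)
  then have y: "circulant_colour k y = circulant_colour k (m * int a)"
    by (simp add: colour_s)
  have "(s * (x + y)) mod ?P = ((s * x) mod ?P + (s * y) mod ?P) mod ?P"
    by (simp add: distrib_left mod_add_eq)
  also have "\<dots> = (int a + (m * int a) mod ?P) mod ?P"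
    using s(2) m by simp
  also have "\<dots> = ((m + 1) * int a) mod ?P"
    by (simp add: mod_add_right_eq algebra_simps)
  finally have "circulant_colour k (s * (x + y)) = circulant_colour k ((m + 1) * int a)"
    by (rule circulant_colour_mod_eq)
  then have "circulant_colour k (x + y) = circulant_colour k ((m + 1) * int a)"
    by (simp add: colour_s)
  with y show ?thesis
    by blast
qed

lemma circulant_colour_triangle:
  assumes prime: "prime (2 * k + 1)" and x: "\<not> (2 * int k + 1) dvd x"
    and card: "card {circulant_colour k x, circulant_colour k y, circulant_colour k (x + y)} = 3"
  defines "a \<equiv> circulant_colour k x"
  shows "\<exists>j\<in>{2..k - 1}. {a, circulant_colour k y, circulant_colour k (x + y)} =
    {a, circulant_colour k (int j * int a), circulant_colour k (int (j + 1) * int a)}"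
proof -
  obtain m where m: "circulant_colour k y = circulant_colour k (m * int a)"
    "circulant_colour k (x + y) = circulant_colour k ((m + 1) * int a)"
    using circulant_colour_multiples[OF prime x] unfolding a_def by blast
  have "a \<le> k"
    using circulant_colour_range[OF x] unfolding a_def by simp
  moreover have "circulant_colour k y \<noteq> a" "circulant_colour k (x + y) \<noteq> a"
    "circulant_colour k y \<noteq> circulant_colour k (x + y)"
    using card unfolding a_def by (auto simp: card_insert_if split: if_splits)
  ultimately show ?thesis
    unfolding m by (rule circulant_colour_triple)
qed

lemma circulant_triangle_set:
  assumes prime: "prime (2 * k + 1)"
    and t: "t \<in> multicoloured_triangle_sets (2 * k + 1) (circulant_colouring k)" and "a \<in> t"
  shows "\<exists>j\<in>{2..k - 1}.
    t = {a, circulant_colour k (int j * int a), circulant_colour k (int (j + 1) * int a)}"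
proof -
  let ?c = "circulant_colour k"
  obtain u v w where uvw: "u < 2 * k + 1" "v < 2 * k + 1" "w < 2 * k + 1" "u \<noteq> v" "v \<noteq> w" "u \<noteq> w"
    and t_uvw: "t = {circulant_colouring k {u, v}, circulant_colouring k {v, w}, circulant_colouring k {u, w}}"
    and "card t = 3"
    using t unfolding multicoloured_triangle_sets_def by blast
  define e1 e2 e3 where "e1 = int v - int u" and "e2 = int w - int v" and "e3 = int u - int w"
  have t_e: "t = {?c e1, ?c e2, ?c e3}"
    using circulant_colour_uminus[of k e3]
    unfolding t_uvw circulant_colouring_pair e1_def e2_def e3_def by simp
  have not_dvd: "\<not> (2 * int k + 1) dvd e1" "\<not> (2 * int k + 1) dvd e2" "\<not> (2 * int k + 1) dvd e3"
    using of_nat_diff_not_dvd[OF uvw(1,2,4)] of_nat_diff_not_dvd[OF uvw(2,3,5)]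
      of_nat_diff_not_dvd[OF uvw(3,1) uvw(6)[symmetric]]
    unfolding e1_def e2_def e3_def by (simp_all add: add.commute)
  have sums: "?c (e1 + e2) = ?c e3" "?c (e2 + e3) = ?c e1" "?c (e3 + e1) = ?c e2"
    using circulant_colour_uminus[of k e1] circulant_colour_uminus[of k e2] circulant_colour_uminus[of k e3]
    unfolding e1_def e2_def e3_def by (simp_all add: algebra_simps)
  from \<open>a \<in> t\<close> consider "a = ?c e1" | "a = ?c e2" | "a = ?c e3"
    unfolding t_e by blast
  then show ?thesis
  proof cases
    case 1
    then show ?thesis
      using circulant_colour_triangle[OF prime, of e1 e2] not_dvd(1) \<open>card t = 3\<close> unfolding t_e sums by simp
  next
    case 2
    have "t = {?c e2, ?c e3, ?c (e2 + e3)}"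
      unfolding t_e sums by (simp only: insert_commute)
    then show ?thesis
      using circulant_colour_triangle[OF prime, of e2 e3] not_dvd(2) \<open>card t = 3\<close> 2 by simp
  next
    case 3
    have "t = {?c e3, ?c e1, ?c (e3 + e1)}"
      unfolding t_e sums by (simp only: insert_commute)
    then show ?thesis
      using circulant_colour_triangle[OF prime, of e3 e1] not_dvd(3) \<open>card t = 3\<close> 3 by simp
  qed
qed

lemma circulant_colour_degree:
  assumes "prime (2 * k + 1)"
  shows "card {t \<in> multicoloured_triangle_sets (2 * k + 1) (circulant_colouring k). a \<in> t} \<le> k - 2"
proof -
  let ?T = "multicoloured_triangle_sets (2 * k + 1) (circulant_colouring k)"
  let ?f = "\<lambda>j. {a, circulant_colour k (int j * int a), circulant_colour k (int (j + 1) * int a)}"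
  have "{t \<in> ?T. a \<in> t} \<subseteq> ?f ` {2..k - 1}"
    using circulant_triangle_set[OF assms] by blast
  then have "card {t \<in> ?T. a \<in> t} \<le> card (?f ` {2..k - 1})"
    by (intro card_mono) simp_all
  also have "\<dots> \<le> card {2..k - 1}"
    by (rule card_image_le) simp
  finally show ?thesis
    by simp
qed

theorem circulant_colouring_triangle_sets_upper_bound:
  assumes "prime (2 * k + 1)"
  shows "3 * card (multicoloured_triangle_sets (2 * k + 1) (circulant_colouring k)) \<le> k * (k - 2)"
proof -
  let ?T = "multicoloured_triangle_sets (2 * k + 1) (circulant_colouring k)"
  have "3 * card ?T = (\<Sum>a\<in>{1..k}. card {t \<in> ?T. a \<in> t})"
    using sum_colour_degrees[OF circulant_colouring_edge_colouring] by simp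
  also have "\<dots> \<le> (\<Sum>a\<in>{1..k}. k - 2)"
    using circulant_colour_degree[OF assms] by (intro sum_mono)
  also have "\<dots> = k * (k - 2)"
    by simp
  finally show ?thesis .
qed

theorem corollary5:
  fixes k :: nat
  assumes "k \<ge> 2" and "prime (2 * k + 1)"
  shows "real (f k) = real k * (real k - 2) / 3"
proof -
  let ?T = "multicoloured_triangle_sets (2 * k + 1) (circulant_colouring k)"
  have connected: "connected_colouring k (2 * k + 1) (circulant_colouring k)"
    using assms(2) by (rule circulant_colouring_connected)
  have upper: "3 * card ?T \<le> k * (k - 2)"
    using assms(2) by (rule circulant_colouring_triangle_sets_upper_bound)
  have "f k = card ?T"
    unfolding f_def
  proof (rule Least_equality)
    show "\<exists>n c. connected_colouring k n c \<and> card ?T = card (multicoloured_triangle_sets n c)"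
      using connected by blast
  next
    fix m assume "\<exists>n c. connected_colouring k n c \<and> m = card (multicoloured_triangle_sets n c)"
    then have "k * (k - 2) \<le> 3 * m"
      using multicoloured_triangle_sets_lower_bound by blast
    then show "card ?T \<le> m"
      using upper by linarith
  qed
  moreover have "k * (k - 2) \<le> 3 * card ?T"
    using connected by (rule multicoloured_triangle_sets_lower_bound)
  ultimately have "3 * f k = k * (k - 2)"
    using upper by linarith
  then have "real (3 * f k) = real (k * (k - 2))"
    by (simp only:)
  then have "3 * real (f k) = real k * (real k - 2)"
    using assms(1) by (simp add: of_nat_diff)
  then show ?thesis
    by simp
qed

end
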